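(* Let $G\subseteq \mathrm{GL}_n(\mathbb{R})$ be a finite group with fundamental invariants $\pi_1,\dots,\pi_m$, so that $\mathbb{R}[X_1,\dots,X_n]^G=\mathbb{R}[\pi_1,\dots,\pi_m]$, and let $\Pi=(\pi_1,\dots,\pi_m):\mathbb{C}^n\to\mathbb{C}^m$ be the Hilbert map. Let $z\in V_{\mathbb{R}}(I_\Pi)$ be a point whose preimage $\Pi^{-1}(z)\subseteq\mathbb{C}^n$ is not contained in $\mathbb{R}^n$. Then there exists $f\in\left(\Sigma\mathbb{R}[\underline{X}]^2\right)^G$ such that $\phi_z(f)<0$.
   Context: $I_\Pi\subseteq\mathbb{R}[z_1,\dots,z_m]$ is the ideal of polynomial relations among $\pi_1,\dots,\pi_m$, and $V_{\mathbb{R}}(I_\Pi)\subseteq\mathbb{R}^m$ its real zero set. For $z\in V_{\mathbb{R}}(I_\Pi)$, $\phi_z:\mathbb{R}[\underline{X}]^G\to\mathbb{R}$ is the ring homomorphism $g(\pi_1,\dots,\pi_m)\mapsto g(z)$ (well defined since $z$ satisfies all relations). $\Sigma\mathbb{R}[\underline{X}]^2$ is the set of finite sums of squares of polynomials in $\mathbb{R}[\underline{X}]=\mathbb{R}[X_1,\dots,X_n]$, and $\left(\Sigma\mathbb{R}[\underline{X}]^2\right)^G=\Sigma\mathbb{R}[\underline{X}]^2\cap\mathbb{R}[\underline{X}]^G$. *)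

theory Defs
  imports "HOL-Analysis.Analysis" "HOL-Library.Poly_Mapping"
begin

type_synonym 'v rpoly = "('v \<Rightarrow>\<^sub>0 nat) \<Rightarrow>\<^sub>0 real"

definition Var :: "'v \<Rightarrow> 'v rpoly" where
  "Var i = Poly_Mapping.single (Poly_Mapping.single i 1) 1"

definition Const :: "real \<Rightarrow> 'v rpoly" where
  "Const c = Poly_Mapping.single 0 c"

text \<open>Used for evaluation at real points, at complex points, and for
  substitution of polynomials into polynomials.\<close>
definition peval :: "(real \<Rightarrow> 'b::comm_semiring_1) \<Rightarrow> ('v \<Rightarrow> 'b) \<Rightarrow> 'v rpoly \<Rightarrow> 'b" where
  "peval c x p = (\<Sum>\<alpha>\<in>Poly_Mapping.keys p. c (Poly_Mapping.lookup p \<alpha>) * (\<Prod>i\<in>Poly_Mapping.keys \<alpha>. x i ^ Poly_Mapping.lookup \<alpha> i))"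

definition eval_real :: "'v rpoly \<Rightarrow> ('v \<Rightarrow> real) \<Rightarrow> real" where
  "eval_real p x = peval id x p"

definition eval_complex :: "'v rpoly \<Rightarrow> ('v \<Rightarrow> complex) \<Rightarrow> complex" where
  "eval_complex p x = peval complex_of_real x p"

definition psubst :: "'v rpoly \<Rightarrow> ('v \<Rightarrow> 'w rpoly) \<Rightarrow> 'w rpoly" where
  "psubst p q = peval Const q p"

definition mat_act :: "real^'n^'n \<Rightarrow> 'n rpoly \<Rightarrow> 'n rpoly" where
  "mat_act g f = psubst f (\<lambda>i. \<Sum>j\<in>UNIV. Const (g $ i $ j) * Var j)"

definition invariants :: "(real^'n^'n) set \<Rightarrow> 'n rpoly set" where
  "invariants G = {f. \<forall>g\<in>G. mat_act g f = f}"

definition finite_matrix_group :: "(real^'n^'n) set \<Rightarrow> bool" where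
  "finite_matrix_group G \<longleftrightarrow> finite G \<and> mat 1 \<in> G \<and>
     (\<forall>g\<in>G. invertible g \<and> matrix_inv g \<in> G) \<and> (\<forall>g\<in>G. \<forall>h\<in>G. g ** h \<in> G)"

definition generates_invariants :: "(real^'n^'n) set \<Rightarrow> ('m \<Rightarrow> 'n rpoly) \<Rightarrow> bool" where
  "generates_invariants G \<pi> \<longleftrightarrow> invariants G = {psubst g \<pi> | g. True}"

definition sos :: "'v rpoly set" where
  "sos = {f. \<exists>qs. f = (\<Sum>q\<leftarrow>qs. q ^ 2)}"

definition relations_ideal :: "('m \<Rightarrow> 'n rpoly) \<Rightarrow> 'm rpoly set" where
  "relations_ideal \<pi> = {g. psubst g \<pi> = 0}"

definition real_zero_set :: "'m rpoly set \<Rightarrow> ('m \<Rightarrow> real) set" where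
  "real_zero_set I = {z. \<forall>g\<in>I. eval_real g z = 0}"

definition phi :: "('m \<Rightarrow> 'n rpoly) \<Rightarrow> ('m \<Rightarrow> real) \<Rightarrow> 'n rpoly \<Rightarrow> real" where
  "phi \<pi> z f = eval_real (SOME g. psubst g \<pi> = f) z"

definition hilbert_fibre :: "('m \<Rightarrow> 'n rpoly) \<Rightarrow> ('m \<Rightarrow> real) \<Rightarrow> ('n \<Rightarrow> complex) set" where
  "hilbert_fibre \<pi> z = {x. \<forall>k. eval_complex (\<pi> k) x = complex_of_real (z k)}"

end

theory Submission
  imports Defs
begin

text \<open>Pick a non-real point x of the fibre. The G-orbits of x and of its conjugate form a finite,
  conjugation-closed set of non-real points, on which Lagrange interpolation produces a real
  polynomial p with p(y) = i or p(y) = -i. Then f = \<Sum>(g.p)^2, summed over g in G, is a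
  G-invariant sum of squares with f(x) = -|G|, and \<phi>_z(f) = f(x) because \<Pi>(x) = z.\<close>

definition monom_eval :: "('v \<Rightarrow> 'b::comm_semiring_1) \<Rightarrow> ('v \<Rightarrow>\<^sub>0 nat) \<Rightarrow> 'b" where
  "monom_eval x \<alpha> = (\<Prod>i\<in>Poly_Mapping.keys \<alpha>. x i ^ Poly_Mapping.lookup \<alpha> i)"

lemma monom_eval_superset:
  assumes "finite S" "Poly_Mapping.keys \<alpha> \<subseteq> S"
  shows "monom_eval x \<alpha> = (\<Prod>i\<in>S. x i ^ Poly_Mapping.lookup \<alpha> i)"
  unfolding monom_eval_def
  by (rule prod.mono_neutral_left[OF assms]) (auto simp: in_keys_iff)

lemma monom_eval_0 [simp]: "monom_eval x 0 = 1"
  by (simp add: monom_eval_def)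

lemma monom_eval_single [simp]: "monom_eval x (Poly_Mapping.single i k) = x i ^ k"
  by (simp add: monom_eval_def)

lemma monom_eval_add: "monom_eval x (\<alpha> + \<beta>) = monom_eval x \<alpha> * monom_eval x \<beta>"
proof -
  let ?S = "Poly_Mapping.keys \<alpha> \<union> Poly_Mapping.keys \<beta>"
  have "monom_eval x (\<alpha> + \<beta>) = (\<Prod>i\<in>?S. x i ^ Poly_Mapping.lookup (\<alpha> + \<beta>) i)"
    using keys_add[of \<alpha> \<beta>] by (intro monom_eval_superset) auto
  also have "\<dots> = (\<Prod>i\<in>?S. x i ^ Poly_Mapping.lookup \<alpha> i) * (\<Prod>i\<in>?S. x i ^ Poly_Mapping.lookup \<beta> i)"
    by (simp add: lookup_add power_add prod.distrib)
  also have "\<dots> = monom_eval x \<alpha> * monom_eval x \<beta>"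
    by (simp add: monom_eval_superset[of ?S])
  finally show ?thesis .
qed

lemma peval_eq_sum_monom_eval:
  "peval c x p = (\<Sum>\<alpha>\<in>Poly_Mapping.keys p. c (Poly_Mapping.lookup p \<alpha>) * monom_eval x \<alpha>)"
  by (simp add: peval_def monom_eval_def)

lemma poly_mapping_sum_single:
  "p = (\<Sum>\<alpha>\<in>Poly_Mapping.keys p. Poly_Mapping.single \<alpha> (Poly_Mapping.lookup p \<alpha>))"
  by (rule poly_mapping_eqI)
     (auto simp: lookup_sum lookup_single when_def in_keys_iff simp del: lookup_single_eq)

locale comm_semiring_hom =
  fixes h :: "'a::comm_semiring_1 \<Rightarrow> 'b::comm_semiring_1"
  assumes hom_0: "h 0 = 0" and hom_1: "h 1 = 1"
    and hom_add: "h (a + b) = h a + h b" and hom_mult: "h (a * b) = h a * h b"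
begin

lemma hom_sum: "h (\<Sum>i\<in>I. f i) = (\<Sum>i\<in>I. h (f i))"
  by (induction I rule: infinite_finite_induct) (auto simp: hom_0 hom_add)

lemma hom_prod: "h (\<Prod>i\<in>I. f i) = (\<Prod>i\<in>I. h (f i))"
  by (induction I rule: infinite_finite_induct) (auto simp: hom_1 hom_mult)

lemma hom_power: "h (a ^ k) = h a ^ k"
  by (induction k) (auto simp: hom_1 hom_mult)

lemma hom_peval: "h (peval c x p) = peval (h \<circ> c) (h \<circ> x) p"
  by (simp add: peval_def hom_sum hom_prod hom_power hom_mult)

end

locale coeff_hom = comm_semiring_hom c for c :: "real \<Rightarrow> 'b::comm_semiring_1"
begin

lemma peval_0: "peval c x 0 = 0"
  by (simp add: peval_def)

lemma peval_add: "peval c x (p + q) = peval c x p + peval c x q"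
  unfolding peval_eq_sum_monom_eval
  by (rule setsum_keys_plus_distrib) (simp_all add: hom_0 hom_add distrib_right)

lemma peval_sum: "peval c x (\<Sum>i\<in>I. f i) = (\<Sum>i\<in>I. peval c x (f i))"
  by (induction I rule: infinite_finite_induct) (simp_all add: peval_0 peval_add)

lemma peval_single: "peval c x (Poly_Mapping.single \<alpha> a) = c a * monom_eval x \<alpha>"
  by (simp add: peval_eq_sum_monom_eval hom_0)

lemma peval_Const: "peval c x (Const a) = c a"
  by (simp add: Const_def peval_single)

lemma peval_Var: "peval c x (Var i) = x i"
  by (simp add: Var_def peval_single hom_1)

lemma peval_mult: "peval c x (p * q) = peval c x p * peval c x q"
proof -
  let ?P = "Poly_Mapping.keys p" and ?Q = "Poly_Mapping.keys q"
  have "p * q = (\<Sum>\<alpha>\<in>?P. \<Sum>\<beta>\<in>?Q. Poly_Mapping.single (\<alpha> + \<beta>)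
                  (Poly_Mapping.lookup p \<alpha> * Poly_Mapping.lookup q \<beta>))"
    by (subst poly_mapping_sum_single[of p], subst poly_mapping_sum_single[of q])
       (simp add: sum_product mult_single)
  then show ?thesis
    by (simp add: peval_sum peval_single hom_mult monom_eval_add mult_ac sum_product
                  peval_eq_sum_monom_eval[of c x p] peval_eq_sum_monom_eval[of c x q])
qed

sublocale peval: comm_semiring_hom "peval c x"
proof
  show "peval c x 1 = 1"
    using peval_Const[of x 1] by (simp add: Const_def hom_1 flip: one_poly_mapping.abs_eq)
qed (simp_all add: peval_0 peval_add peval_mult)

end

interpretation Const: coeff_hom "Const :: real \<Rightarrow> 'v rpoly"
  by unfold_locales (simp_all add: Const_def single_add mult_single)

interpretation of_real: coeff_hom "of_real :: real \<Rightarrow> 'a::{comm_ring_1, real_algebra_1}"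
  by unfold_locales simp_all

interpretation cnj: comm_semiring_hom cnj
  by unfold_locales simp_all

lemma eval_complex_psubst:
  "eval_complex (psubst p q) y = peval of_real (\<lambda>i. eval_complex (q i) y) p"
proof -
  have "peval of_real y \<circ> Const = of_real"
    by (auto simp: of_real.peval_Const)
  then show ?thesis
    unfolding eval_complex_def psubst_def of_real.peval.hom_peval by (simp add: o_def)
qed

lemma psubst_psubst: "psubst (psubst p q) r = psubst p (\<lambda>i. psubst (q i) r)"
proof -
  have "peval Const r \<circ> Const = Const"
    by (auto simp: Const.peval_Const)
  then show ?thesis
    unfolding psubst_def Const.peval.hom_peval by (simp add: o_def)
qed

lemma of_real_eval_real: "of_real (eval_real p z) = eval_complex p (of_real \<circ> z)"
  by (simp add: eval_real_def eval_complex_def of_real.hom_peval)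

lemma cnj_eval_complex: "cnj (eval_complex p y) = eval_complex p (cnj \<circ> y)"
  by (simp add: eval_complex_def cnj.hom_peval o_def)

lemma eval_complex_0 [simp]: "eval_complex 0 y = 0"
  and eval_complex_add [simp]: "eval_complex (p + q) y = eval_complex p y + eval_complex q y"
  and eval_complex_mult [simp]: "eval_complex (p * q) y = eval_complex p y * eval_complex q y"
  and eval_complex_sum [simp]: "eval_complex (\<Sum>i\<in>I. f i) y = (\<Sum>i\<in>I. eval_complex (f i) y)"
  and eval_complex_power [simp]: "eval_complex (p ^ k) y = eval_complex p y ^ k"
  and eval_complex_Const [simp]: "eval_complex (Const c) y = of_real c"
  and eval_complex_Var [simp]: "eval_complex (Var i) y = y i"
  by (simp_all add: eval_complex_def of_real.peval.hom_0 of_real.peval.hom_add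
      of_real.peval.hom_mult of_real.peval.hom_sum of_real.peval.hom_power
      of_real.peval_Const of_real.peval_Var)

interpretation mat_act: comm_semiring_hom "mat_act g"
  unfolding mat_act_def[abs_def] psubst_def by (rule Const.peval.comm_semiring_hom_axioms)

lemma mat_act_mat_act: "mat_act h (mat_act g p) = mat_act (g ** h) p"
proof -
  have "psubst (\<Sum>j\<in>UNIV. Const (g $ i $ j) * Var j) (\<lambda>j. \<Sum>k\<in>UNIV. Const (h $ j $ k) * Var k)
        = (\<Sum>k\<in>UNIV. Const ((g ** h) $ i $ k) * Var k)" for i
  proof -
    have "psubst (\<Sum>j\<in>UNIV. Const (g $ i $ j) * Var j) (\<lambda>j. \<Sum>k\<in>UNIV. Const (h $ j $ k) * Var k)
        = (\<Sum>j\<in>UNIV. \<Sum>k\<in>UNIV. Const (g $ i $ j * h $ j $ k) * Var k)"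
      by (simp add: psubst_def Const.peval_sum Const.peval_mult Const.peval_Const Const.peval_Var
                    sum_distrib_left Const.hom_mult mult.assoc)
    also have "\<dots> = (\<Sum>k\<in>UNIV. Const ((g ** h) $ i $ k) * Var k)"
      by (subst sum.swap) (simp add: matrix_matrix_mult_def Const.hom_sum sum_distrib_right)
    finally show ?thesis .
  qed
  then show ?thesis
    unfolding mat_act_def psubst_psubst by simp
qed

definition mat_apply :: "real^'n^'n \<Rightarrow> ('n \<Rightarrow> complex) \<Rightarrow> 'n \<Rightarrow> complex" where
  "mat_apply g y = (\<lambda>i. \<Sum>j\<in>UNIV. of_real (g $ i $ j) * y j)"

lemma eval_complex_mat_act: "eval_complex (mat_act g p) y = eval_complex p (mat_apply g y)"
  unfolding mat_act_def eval_complex_psubst mat_apply_def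
  by (simp add: eval_complex_def [symmetric])

lemma mat_apply_mat_apply: "mat_apply h (mat_apply g y) = mat_apply (h ** g) y"
proof
  fix i
  have "mat_apply h (mat_apply g y) i = (\<Sum>j\<in>UNIV. \<Sum>k\<in>UNIV. of_real (h $ i $ j * g $ j $ k) * y k)"
    by (simp add: mat_apply_def sum_distrib_left mult.assoc)
  also have "\<dots> = mat_apply (h ** g) y i"
    by (subst sum.swap) (simp add: mat_apply_def matrix_matrix_mult_def sum_distrib_right)
  finally show "mat_apply h (mat_apply g y) i = mat_apply (h ** g) y i" .
qed

lemma mat_apply_mat_1: "mat_apply (mat 1) y = y"
proof
  fix i
  have "mat_apply (mat 1) y i = (\<Sum>j\<in>UNIV. if i = j then y j else 0)"
    unfolding mat_apply_def mat_def by (intro sum.cong) auto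
  then show "mat_apply (mat 1) y i = y i" by simp
qed

lemma cnj_mat_apply: "cnj \<circ> mat_apply g y = mat_apply g (cnj \<circ> y)"
  by (simp add: mat_apply_def fun_eq_iff)

lemma matrix_inv_mult:
  fixes A :: "'a::semiring_1^'n^'n"
  assumes "invertible A"
  shows "A ** matrix_inv A = mat 1" and "matrix_inv A ** A = mat 1"
proof -
  from assms obtain A' :: "'a^'n^'n" where "A ** A' = mat 1 \<and> A' ** A = mat 1"
    unfolding invertible_def by blast
  then have "A ** matrix_inv A = mat 1 \<and> matrix_inv A ** A = mat 1"
    unfolding matrix_inv_def by (rule someI)
  then show "A ** matrix_inv A = mat 1" and "matrix_inv A ** A = mat 1" by auto
qed

lemma mat_apply_nonreal:
  assumes "invertible g" and "\<exists>i. Im (y i) \<noteq> 0"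
  shows "\<exists>i. Im (mat_apply g y i) \<noteq> 0"
proof (rule ccontr)
  assume "\<not> ?thesis"
  then have "\<forall>i. Im (mat_apply (matrix_inv g) (mat_apply g y) i) = 0"
    by (simp add: mat_apply_def)
  then show False
    using assms by (simp add: mat_apply_mat_apply matrix_inv_mult mat_apply_mat_1)
qed

lemma finite_matrix_group_sum_mult_right:
  assumes G: "finite_matrix_group G" and h: "h \<in> G"
  shows "(\<Sum>g\<in>G. F (g ** h)) = (\<Sum>g\<in>G. F g)"
proof (rule sum.reindex_bij_witness[where i = "\<lambda>g. g ** matrix_inv h" and j = "\<lambda>g. g ** h"])
  have inv: "invertible h" "matrix_inv h \<in> G" and mult: "\<And>a b. a \<in> G \<Longrightarrow> b \<in> G \<Longrightarrow> a ** b \<in> G"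
    using G h by (auto simp: finite_matrix_group_def)
  fix g assume "g \<in> G"
  then show "g ** h ** matrix_inv h = g" and "g ** matrix_inv h ** h = g"
    and "g ** h \<in> G" and "g ** matrix_inv h \<in> G"
    using inv h mult by (simp_all add: matrix_inv_mult flip: matrix_mul_assoc)
qed simp

lemma sum_mat_act_invariant:
  assumes "finite_matrix_group G"
  shows "(\<Sum>g\<in>G. mat_act g q) \<in> invariants G"
  unfolding invariants_def
proof (intro CollectI ballI)
  fix h assume "h \<in> G"
  have "mat_act h (\<Sum>g\<in>G. mat_act g q) = (\<Sum>g\<in>G. mat_act (g ** h) q)"
    by (simp add: mat_act.hom_sum mat_act_mat_act)
  also have "\<dots> = (\<Sum>g\<in>G. mat_act g q)"
    using finite_matrix_group_sum_mult_right[OF assms \<open>h \<in> G\<close>] .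
  finally show "mat_act h (\<Sum>g\<in>G. mat_act g q) = (\<Sum>g\<in>G. mat_act g q)" .
qed

lemma sum_squares_in_sos:
  assumes "finite A"
  shows "(\<Sum>a\<in>A. f a ^ 2) \<in> sos"
proof -
  obtain as where "distinct as" "set as = A"
    using finite_distinct_list[OF assms] by blast
  then have "(\<Sum>a\<in>A. f a ^ 2) = (\<Sum>q\<leftarrow>map f as. q ^ 2)"
    by (simp add: o_def sum_list_distinct_conv_sum_set)
  then show ?thesis
    unfolding sos_def by blast
qed

lemma phi_eq_eval_complex_fibre:
  assumes "\<exists>g. psubst g \<pi> = f" and "x \<in> hilbert_fibre \<pi> z"
  shows "of_real (phi \<pi> z f) = eval_complex f x"
proof -
  define g where "g = (SOME g. psubst g \<pi> = f)"
  have "psubst g \<pi> = f"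
    unfolding g_def using assms(1) by (rule someI_ex)
  have "of_real (phi \<pi> z f) = eval_complex g (of_real \<circ> z)"
    by (simp add: phi_def g_def of_real_eval_real)
  also have "\<dots> = peval of_real (\<lambda>k. eval_complex (\<pi> k) x) g"
    using assms(2) by (simp add: eval_complex_def hilbert_fibre_def o_def)
  also have "\<dots> = eval_complex f x"
    using eval_complex_psubst[of g \<pi> x] \<open>psubst g \<pi> = f\<close> by simp
  finally show ?thesis .
qed

definition complex_poly_fun :: "(('n \<Rightarrow> complex) \<Rightarrow> complex) \<Rightarrow> bool" where
  "complex_poly_fun F \<longleftrightarrow> (\<exists>P Q :: 'n rpoly. \<forall>y. F y = eval_complex P y + \<i> * eval_complex Q y)"

lemma complex_poly_fun_const: "complex_poly_fun (\<lambda>y. c)"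
  unfolding complex_poly_fun_def
  by (rule exI[of _ "Const (Re c)"], rule exI[of _ "Const (Im c)"])
     (simp add: complex_eq_iff)

lemma complex_poly_fun_coord: "complex_poly_fun (\<lambda>y. y j)"
  unfolding complex_poly_fun_def
  by (rule exI[of _ "Var j"], rule exI[of _ 0]) simp

lemma complex_poly_fun_add:
  assumes "complex_poly_fun F" and "complex_poly_fun G"
  shows "complex_poly_fun (\<lambda>y. F y + G y)"
proof -
  obtain P1 Q1 P2 Q2 where "\<And>y. F y = eval_complex P1 y + \<i> * eval_complex Q1 y"
    and "\<And>y. G y = eval_complex P2 y + \<i> * eval_complex Q2 y"
    using assms unfolding complex_poly_fun_def by blast
  then show ?thesis
    unfolding complex_poly_fun_def
    by (intro exI[of _ "P1 + P2"] exI[of _ "Q1 + Q2"]) (simp add: algebra_simps)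
qed

lemma complex_poly_fun_mult:
  assumes "complex_poly_fun F" and "complex_poly_fun G"
  shows "complex_poly_fun (\<lambda>y. F y * G y)"
proof -
  obtain P1 Q1 P2 Q2 where "\<And>y. F y = eval_complex P1 y + \<i> * eval_complex Q1 y"
    and "\<And>y. G y = eval_complex P2 y + \<i> * eval_complex Q2 y"
    using assms unfolding complex_poly_fun_def by blast
  then show ?thesis
    unfolding complex_poly_fun_def
    by (intro exI[of _ "P1 * P2 + Const (- 1) * Q1 * Q2"] exI[of _ "P1 * Q2 + Q1 * P2"])
       (simp add: algebra_simps)
qed

lemma complex_poly_fun_sum:
  "(\<And>i. i \<in> I \<Longrightarrow> complex_poly_fun (F i)) \<Longrightarrow> complex_poly_fun (\<lambda>y. \<Sum>i\<in>I. F i y)"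
  by (induction I rule: infinite_finite_induct)
     (auto simp: complex_poly_fun_const intro: complex_poly_fun_add)

lemma complex_poly_fun_prod:
  "(\<And>i. i \<in> I \<Longrightarrow> complex_poly_fun (F i)) \<Longrightarrow> complex_poly_fun (\<lambda>y. \<Prod>i\<in>I. F i y)"
  by (induction I rule: infinite_finite_induct)
     (auto simp: complex_poly_fun_const intro: complex_poly_fun_mult)

lemma complex_poly_fun_interpolation:
  fixes \<Omega> :: "('n \<Rightarrow> complex) set"
  assumes "finite \<Omega>"
  shows "\<exists>F. complex_poly_fun F \<and> (\<forall>y\<in>\<Omega>. F y = t y)"
proof -
  define j where "j v w = (SOME j. v j \<noteq> w j)" for v w :: "'n \<Rightarrow> complex"
  have j: "v (j v w) \<noteq> w (j v w)" if "v \<noteq> w" for v w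
  proof -
    from that obtain i where "v i \<noteq> w i" by auto
    then show ?thesis unfolding j_def by (rule someI)
  qed
  define L where
    "L w y = (\<Prod>v\<in>\<Omega> - {w}. (y (j v w) - v (j v w)) / (w (j v w) - v (j v w)))" for w y
  have L_self: "L w w = 1" if "w \<in> \<Omega>" for w
    unfolding L_def
  proof (intro prod.neutral ballI)
    fix v assume "v \<in> \<Omega> - {w}"
    then have "w (j v w) - v (j v w) \<noteq> 0"
      using j[of v w] by auto
    then show "(w (j v w) - v (j v w)) / (w (j v w) - v (j v w)) = 1"
      by simp
  qed
  have L_other: "L w v = 0" if "v \<in> \<Omega>" "v \<noteq> w" for v w
    unfolding L_def using that assms by (intro prod_zero) auto
  define F where "F y = (\<Sum>w\<in>\<Omega>. t w * L w y)" for y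
  have "complex_poly_fun F"
    unfolding F_def L_def diff_conv_add_uminus divide_inverse
    by (intro complex_poly_fun_sum complex_poly_fun_mult complex_poly_fun_prod
              complex_poly_fun_add complex_poly_fun_const complex_poly_fun_coord)
  moreover have "F w = t w" if "w \<in> \<Omega>" for w
  proof -
    have "F w = t w * L w w + (\<Sum>v\<in>\<Omega> - {w}. t v * L v w)"
      unfolding F_def using that assms by (simp add: sum.remove)
    also have "(\<Sum>v\<in>\<Omega> - {w}. t v * L v w) = 0"
      using that by (intro sum.neutral) (auto simp: L_other)
    finally show ?thesis
      using L_self[OF that] by simp
  qed
  ultimately show ?thesis by blast
qed

lemma real_poly_interpolation:
  assumes "finite \<Omega>" and "\<And>y. y \<in> \<Omega> \<Longrightarrow> cnj \<circ> y \<in> \<Omega>"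
    and "\<And>y. y \<in> \<Omega> \<Longrightarrow> t (cnj \<circ> y) = cnj (t y)"
  shows "\<exists>p. \<forall>y\<in>\<Omega>. eval_complex p y = t y"
proof -
  obtain F where "complex_poly_fun F" and F: "\<And>y. y \<in> \<Omega> \<Longrightarrow> F y = t y"
    using complex_poly_fun_interpolation[OF assms(1)] by blast
  then obtain P Q where PQ: "\<And>y. F y = eval_complex P y + \<i> * eval_complex Q y"
    unfolding complex_poly_fun_def by blast
  have "eval_complex P y = t y" if "y \<in> \<Omega>" for y
  proof -
    have plus: "t y = eval_complex P y + \<i> * eval_complex Q y"
      using F[OF that] PQ by simp
    have "t y = cnj (t (cnj \<circ> y))"
      using assms(3)[OF that] by simp
    also have "\<dots> = cnj (eval_complex P (cnj \<circ> y) + \<i> * eval_complex Q (cnj \<circ> y))"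
      using F[OF assms(2)[OF that]] PQ by simp
    also have "\<dots> = eval_complex P y - \<i> * eval_complex Q y"
      by (simp flip: cnj_eval_complex)
    finally show ?thesis
      using plus by (simp add: algebra_simps)
  qed
  then show ?thesis by blast
qed

lemma real_poly_square_eq_neg_one:
  assumes "finite \<Omega>" and "\<And>y. y \<in> \<Omega> \<Longrightarrow> cnj \<circ> y \<in> \<Omega>"
    and "\<And>y. y \<in> \<Omega> \<Longrightarrow> \<exists>i. Im (y i) \<noteq> 0"
  shows "\<exists>p. \<forall>y\<in>\<Omega>. eval_complex p y ^ 2 = -1"
proof -
  \<comment> \<open>The sign is read off the same coordinate of y and of its conjugate, so t commutes
    with conjugation.\<close>
  define j where "j y = (SOME i. Im (y i) \<noteq> 0)" for y :: "'a \<Rightarrow> complex"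
  define t where "t y = (if Im (y (j y)) > 0 then \<i> else - \<i>)" for y
  have "t (cnj \<circ> y) = cnj (t y)" if "y \<in> \<Omega>" for y
  proof -
    have "Im (y (j y)) \<noteq> 0"
      unfolding j_def using assms(3)[OF that] by (rule someI_ex)
    moreover have "j (cnj \<circ> y) = j y"
      by (simp add: j_def)
    ultimately show ?thesis
      by (auto simp: t_def)
  qed
  then obtain p where "\<And>y. y \<in> \<Omega> \<Longrightarrow> eval_complex p y = t y"
    using real_poly_interpolation[OF assms(1,2)] by blast
  then have "eval_complex p y ^ 2 = -1" if "y \<in> \<Omega>" for y
    using that by (simp add: t_def power2_eq_square)
  then show ?thesis by blast
qed

lemma real_poly_square_eq_neg_one_on_orbit:
  assumes G: "finite_matrix_group G" and x: "\<exists>i. Im (x i) \<noteq> 0"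
  shows "\<exists>p. \<forall>g\<in>G. eval_complex p (mat_apply g x) ^ 2 = -1"
proof -
  let ?\<Omega> = "(\<lambda>g. mat_apply g x) ` G \<union> (\<lambda>g. mat_apply g (cnj \<circ> x)) ` G"
  have "finite ?\<Omega>"
    using G by (simp add: finite_matrix_group_def)
  moreover have "cnj \<circ> y \<in> ?\<Omega>" if "y \<in> ?\<Omega>" for y
  proof -
    have "cnj \<circ> (cnj \<circ> x) = x"
      by (simp add: fun_eq_iff)
    then show ?thesis
      using that by (auto simp: cnj_mat_apply)
  qed
  moreover have "\<exists>i. Im (y i) \<noteq> 0" if "y \<in> ?\<Omega>" for y
  proof -
    from that obtain g where "g \<in> G" and "y = mat_apply g x \<or> y = mat_apply g (cnj \<circ> x)"
      by blast
    moreover have "invertible g"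
      using G \<open>g \<in> G\<close> by (simp add: finite_matrix_group_def)
    moreover have "\<exists>i. Im ((cnj \<circ> x) i) \<noteq> 0"
      using x by simp
    ultimately show ?thesis
      using x mat_apply_nonreal by blast
  qed
  ultimately obtain p where "\<forall>y\<in>?\<Omega>. eval_complex p y ^ 2 = -1"
    using real_poly_square_eq_neg_one by blast
  then show ?thesis by blast
qed

theorem proposition2p4:
  fixes G :: "(real^'n^'n) set" and \<pi> :: "'m::finite \<Rightarrow> 'n rpoly" and z :: "'m \<Rightarrow> real"
  assumes "finite_matrix_group G"
    and "generates_invariants G \<pi>"
    and "z \<in> real_zero_set (relations_ideal \<pi>)"
    and "\<not> hilbert_fibre \<pi> z \<subseteq> {x. \<forall>i. Im (x i) = 0}"
  shows "\<exists>f \<in> sos \<inter> invariants G. phi \<pi> z f < 0"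
proof -
  obtain x where x: "x \<in> hilbert_fibre \<pi> z" and "\<exists>i. Im (x i) \<noteq> 0"
    using assms(4) by auto
  then obtain p where p: "\<And>g. g \<in> G \<Longrightarrow> eval_complex p (mat_apply g x) ^ 2 = -1"
    using real_poly_square_eq_neg_one_on_orbit[OF assms(1)] by blast
  define f where "f = (\<Sum>g\<in>G. mat_act g (p ^ 2))"
  have "finite G" and "G \<noteq> {}"
    using assms(1) by (auto simp: finite_matrix_group_def)
  then have "f \<in> sos"
    by (simp add: f_def mat_act.hom_power sum_squares_in_sos)
  have "f \<in> invariants G"
    unfolding f_def using assms(1) by (rule sum_mat_act_invariant)
  have "of_real (phi \<pi> z f) = eval_complex f x"
    using \<open>f \<in> invariants G\<close> assms(2) x
    by (intro phi_eq_eval_complex_fibre) (auto simp: generates_invariants_def)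
  also have "\<dots> = (\<Sum>g\<in>G. eval_complex p (mat_apply g x) ^ 2)"
    by (simp add: f_def eval_complex_mat_act)
  also have "\<dots> = of_real (- real (card G))"
    using p by simp
  finally have "phi \<pi> z f < 0"
    using \<open>finite G\<close> \<open>G \<noteq> {}\<close> by (simp only: of_real_eq_iff) (simp add: card_gt_0_iff)
  with \<open>f \<in> sos\<close> \<open>f \<in> invariants G\<close> show ?thesis
    by blast
qed

end
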